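(* Let $p$ be an odd prime and $P$ a finite $p$-group of class $2$ and exponent $p$. If $\mathcal{H}$ and $\mathcal{K}$ are two fully refined central decompositions of $P$ such that $\{HZ(P) : H\in\mathcal{H}\}=\{KZ(P): K\in\mathcal{K}\}$, then $\mathcal{H}$ and $\mathcal{K}$ are exchangeable.
   Context: A central decomposition of a group $G$ is a set $\mathcal{H}$ of subgroups of $G$ such that distinct members commute elementwise, $G$ is generated by $\mathcal{H}$, and no proper subset of $\mathcal{H}$ generates $G$. A group is centrally indecomposable if its only central decomposition is $\{G\}$; a central decomposition is fully refined if all its members are centrally indecomposable. Two central decompositions $\mathcal{H}$ and $\mathcal{K}$ of $G$ are exchangeable if for each subset $\mathcal{J}\subseteq\mathcal{H}$ there is $\alpha\in\operatorname{Aut}G$ such that $\mathcal{J}\alpha\subseteq\mathcal{K}$ and $(\mathcal{H}-\mathcal{J})\alpha=\mathcal{H}-\mathcal{J}$, where $\mathcal{J}\alpha=\{J\alpha: J\in\mathcal{J}\}$. *)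

theory Defs
  imports "HOL-Algebra.Algebra"
begin

definition group_center :: "('a, 'b) monoid_scheme \<Rightarrow> 'a set" where
  "group_center G = {z \<in> carrier G. \<forall>x \<in> carrier G. z \<otimes>\<^bsub>G\<^esub> x = x \<otimes>\<^bsub>G\<^esub> z}"

definition central_decomposition :: "('a, 'b) monoid_scheme \<Rightarrow> 'a set set \<Rightarrow> bool" where
  "central_decomposition G \<H> \<longleftrightarrow>
     (\<forall>H \<in> \<H>. subgroup H G) \<and>
     (\<forall>H \<in> \<H>. \<forall>K \<in> \<H>. H \<noteq> K \<longrightarrow>
        (\<forall>x \<in> H. \<forall>y \<in> K. x \<otimes>\<^bsub>G\<^esub> y = y \<otimes>\<^bsub>G\<^esub> x)) \<and>
     generate G (\<Union>\<H>) = carrier G \<and>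
     (\<forall>\<J>. \<J> \<subset> \<H> \<longrightarrow> generate G (\<Union>\<J>) \<noteq> carrier G)"

definition centrally_indecomposable :: "('a, 'b) monoid_scheme \<Rightarrow> 'a set \<Rightarrow> bool" where
  "centrally_indecomposable G H \<longleftrightarrow>
     (\<forall>\<H>. central_decomposition (G\<lparr>carrier := H\<rparr>) \<H> \<longleftrightarrow> \<H> = {H})"

definition fully_refined :: "('a, 'b) monoid_scheme \<Rightarrow> 'a set set \<Rightarrow> bool" where
  "fully_refined G \<H> \<longleftrightarrow>
     central_decomposition G \<H> \<and> (\<forall>H \<in> \<H>. centrally_indecomposable G H)"

definition exchangeable :: "('a, 'b) monoid_scheme \<Rightarrow> 'a set set \<Rightarrow> 'a set set \<Rightarrow> bool" where
  "exchangeable G \<H> \<K> \<longleftrightarrow>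
     (\<forall>\<J>. \<J> \<subseteq> \<H> \<longrightarrow>
        (\<exists>\<alpha> \<in> iso G G. (\<lambda>J. \<alpha> ` J) ` \<J> \<subseteq> \<K> \<and>
                         (\<lambda>J. \<alpha> ` J) ` (\<H> - \<J>) = \<H> - \<J>))"

definition nilpotent_class_two :: "('a, 'b) monoid_scheme \<Rightarrow> bool" where
  "nilpotent_class_two G \<longleftrightarrow>
     derived G (carrier G) \<subseteq> group_center G \<and> group_center G \<noteq> carrier G"

definition has_exponent :: "('a, 'b) monoid_scheme \<Rightarrow> nat \<Rightarrow> bool" where
  "has_exponent G p \<longleftrightarrow>
     (\<forall>x \<in> carrier G. x [^]\<^bsub>G\<^esub> p = \<one>\<^bsub>G\<^esub>) \<and> carrier G \<noteq> {\<one>\<^bsub>G\<^esub>}"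

end

theory Submission
  imports Defs
begin

text \<open>
  Write \<open>Z\<close> for the centre. For a member \<open>A\<close> of a central decomposition let \<open>N\<close> be the
  subgroup generated by the other members, so that \<open>G = AN\<close> and \<open>[A, N] = 1\<close>. The members of
  \<open>\<H>\<close> are exchanged one at a time: an automorphism fixing \<open>N\<close> pointwise and carrying \<open>A\<close> onto
  a member \<open>K\<close> of \<open>\<K>\<close> with \<open>KZ = AZ\<close> is obtained by extending a homomorphism \<open>\<psi> : A \<rightarrow> G\<close>
  that commutes with \<open>N\<close>, fixes \<open>A \<inter> N\<close> and sends no element outside \<open>A \<inter> N\<close> into \<open>N\<close>.

  If \<open>A\<close> is not central, indecomposability forces \<open>A \<inter> Z \<le> [A, A]\<close>, whence \<open>A \<inter> Z \<le> K\<close> and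
  \<open>K \<inter> Z \<le> A\<close>; choosing a complement \<open>W\<close> of \<open>K \<inter> Z\<close> in \<open>Z\<close>, the map \<open>\<psi>\<close> is the projection
  of \<open>A \<le> K \<times> W\<close> onto \<open>K\<close>. If \<open>A\<close> is central, it is cyclic of order \<open>p\<close>, and some central
  member \<open>K\<close> of \<open>\<K>\<close> is not contained in \<open>N\<close>, for otherwise first \<open>Z\<close> and then every member
  of \<open>\<K>\<close> would lie in \<open>N\<close>; then \<open>\<psi>\<close> maps a generator of \<open>A\<close> to one of \<open>K\<close>.
\<close>

section \<open>Centralisers and products of commuting subgroups\<close>

definition centralizer :: "('a, 'b) monoid_scheme \<Rightarrow> 'a set \<Rightarrow> 'a set" where
  "centralizer G S = {x \<in> carrier G. \<forall>s \<in> S. x \<otimes>\<^bsub>G\<^esub> s = s \<otimes>\<^bsub>G\<^esub> x}"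

context group
begin

lemma inv_mult_cancel_left [simp]: "a \<in> carrier G \<Longrightarrow> b \<in> carrier G \<Longrightarrow> inv a \<otimes> (a \<otimes> b) = b"
  by (simp add: m_assoc[symmetric])

lemma mult_inv_cancel_left [simp]: "a \<in> carrier G \<Longrightarrow> b \<in> carrier G \<Longrightarrow> a \<otimes> (inv a \<otimes> b) = b"
  by (simp add: m_assoc[symmetric])

lemma subgroup_centralizer:
  assumes "S \<subseteq> carrier G"
  shows "subgroup (centralizer G S) G"
proof (rule subgroupI)
  show "centralizer G S \<subseteq> carrier G" "centralizer G S \<noteq> {}"
    using assms by (auto simp: centralizer_def intro!: exI[of _ \<one>])
next
  fix a assume "a \<in> centralizer G S"
  then have a: "a \<in> carrier G" and comm: "\<And>s. s \<in> S \<Longrightarrow> a \<otimes> s = s \<otimes> a"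
    by (auto simp: centralizer_def)
  have "inv a \<otimes> s = s \<otimes> inv a" if s: "s \<in> S" for s
  proof -
    have sc: "s \<in> carrier G" using s assms by blast
    have "inv a \<otimes> s = inv a \<otimes> s \<otimes> (a \<otimes> inv a)" using a sc by simp
    also have "\<dots> = inv a \<otimes> (a \<otimes> s) \<otimes> inv a" using a sc comm[OF s] by (simp add: m_assoc)
    also have "\<dots> = s \<otimes> inv a" using a sc by (simp add: m_assoc[symmetric])
    finally show ?thesis .
  qed
  with a show "inv a \<in> centralizer G S" by (simp add: centralizer_def)
next
  fix a b assume "a \<in> centralizer G S" "b \<in> centralizer G S"
  then have a: "a \<in> carrier G" "\<And>s. s \<in> S \<Longrightarrow> a \<otimes> s = s \<otimes> a"
    and b: "b \<in> carrier G" "\<And>s. s \<in> S \<Longrightarrow> b \<otimes> s = s \<otimes> b"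
    by (auto simp: centralizer_def)
  have "a \<otimes> b \<otimes> s = s \<otimes> (a \<otimes> b)" if s: "s \<in> S" for s
  proof -
    have sc: "s \<in> carrier G" using s assms by blast
    have "a \<otimes> b \<otimes> s = a \<otimes> (s \<otimes> b)" using a b sc b(2)[OF s] by (simp add: m_assoc)
    also have "\<dots> = s \<otimes> (a \<otimes> b)" using a sc b by (simp add: a(2)[OF s] m_assoc[symmetric])
    finally show ?thesis .
  qed
  with a b show "a \<otimes> b \<in> centralizer G S" by (simp add: centralizer_def)
qed

lemma commute_generate:
  assumes "S \<subseteq> carrier G" "T \<subseteq> carrier G" "\<And>s t. s \<in> S \<Longrightarrow> t \<in> T \<Longrightarrow> s \<otimes> t = t \<otimes> s"
    and "x \<in> generate G S" "y \<in> generate G T"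
  shows "x \<otimes> y = y \<otimes> x"
proof -
  have "generate G T \<subseteq> centralizer G S"
    using assms(2,3) by (intro generate_subgroup_incl subgroup_centralizer[OF assms(1)])
      (auto simp: centralizer_def)
  then have "S \<subseteq> centralizer G (generate G T)"
    using assms(1) by (auto simp: centralizer_def)
  then have "generate G S \<subseteq> centralizer G (generate G T)"
    by (intro generate_subgroup_incl subgroup_centralizer generate_incl assms(2))
  then show ?thesis using assms(4,5) by (auto simp: centralizer_def)
qed

lemma group_center_eq_centralizer: "group_center G = centralizer G (carrier G)"
  by (auto simp: centralizer_def group_center_def)

lemma subgroup_group_center: "subgroup (group_center G) G"
  by (simp add: group_center_eq_centralizer subgroup_centralizer)

lemma group_center_closed: "z \<in> group_center G \<Longrightarrow> z \<in> carrier G"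
  by (simp add: group_center_def)

lemma group_center_commute: "z \<in> group_center G \<Longrightarrow> x \<in> carrier G \<Longrightarrow> z \<otimes> x = x \<otimes> z"
  by (simp add: group_center_def)

lemma group_center_left_commute:
  assumes "z \<in> group_center G" "x \<in> carrier G" "y \<in> carrier G"
  shows "z \<otimes> (x \<otimes> y) = x \<otimes> (z \<otimes> y)"
  using assms group_center_closed group_center_commute by (metis m_assoc)

lemma group_centerI_generate:
  assumes "generate G S = carrier G" "S \<subseteq> carrier G" "x \<in> carrier G"
    and "\<And>y. y \<in> S \<Longrightarrow> x \<otimes> y = y \<otimes> x"
  shows "x \<in> group_center G"
proof -
  have "generate G S \<subseteq> centralizer G {x}"
    using assms(2-4) by (intro generate_subgroup_incl subgroup_centralizer)
      (auto simp: centralizer_def)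
  then show ?thesis using assms(1,3) by (auto simp: centralizer_def group_center_def)
qed

lemma set_mult_memI: "h \<in> H \<Longrightarrow> k \<in> K \<Longrightarrow> h \<otimes> k \<in> H <#> K"
  unfolding set_mult_def by blast

lemma set_mult_memE:
  "x \<in> H <#> K \<Longrightarrow> (\<And>h k. h \<in> H \<Longrightarrow> k \<in> K \<Longrightarrow> x = h \<otimes> k \<Longrightarrow> P) \<Longrightarrow> P"
  unfolding set_mult_def by blast

lemma subset_set_mult_right:
  assumes "subgroup K G" "H \<subseteq> carrier G"
  shows "H \<subseteq> H <#> K"
proof
  fix h assume "h \<in> H"
  then show "h \<in> H <#> K"
    using set_mult_memI[of h H \<one> K] subgroup.one_closed[OF assms(1)] assms(2) by auto
qed

lemma subset_set_mult_left:
  assumes "subgroup H G" "K \<subseteq> carrier G"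
  shows "K \<subseteq> H <#> K"
proof
  fix k assume "k \<in> K"
  then show "k \<in> H <#> K"
    using set_mult_memI[of \<one> H k K] subgroup.one_closed[OF assms(1)] assms(2) by auto
qed

lemma set_mult_subgroup_subset:
  "subgroup S G \<Longrightarrow> H \<subseteq> S \<Longrightarrow> K \<subseteq> S \<Longrightarrow> H <#> K \<subseteq> S"
  by (auto elim!: set_mult_memE intro: subgroup.m_closed)

lemma set_mult_group_center_eq:
  assumes "subgroup H G" "H \<subseteq> group_center G"
  shows "H <#> group_center G = group_center G"
  using set_mult_subgroup_subset[OF subgroup_group_center assms(2)]
    subset_set_mult_left[OF assms(1)] group_center_closed by blast

lemma subgroup_set_mult_normalizing:
  assumes M: "subgroup M G" and L: "subgroup L G"
    and norm: "\<And>l m. l \<in> L \<Longrightarrow> m \<in> M \<Longrightarrow> l \<otimes> m \<otimes> inv l \<in> M"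
  shows "subgroup (M <#> L) G"
proof (rule subgroupI)
  have Mc: "M \<subseteq> carrier G" and Lc: "L \<subseteq> carrier G" using M L subgroup.subset by auto
  show "M <#> L \<subseteq> carrier G" using Mc Lc by (auto elim!: set_mult_memE)
  show "M <#> L \<noteq> {}"
    using set_mult_memI[OF subgroup.one_closed[OF M] subgroup.one_closed[OF L]] by blast
next
  fix a assume "a \<in> M <#> L"
  then obtain m l where ml: "m \<in> M" "l \<in> L" and a: "a = m \<otimes> l" by (auto elim!: set_mult_memE)
  have c: "m \<in> carrier G" "l \<in> carrier G" using ml M L subgroup.subset by blast+
  have "inv a = (inv l \<otimes> inv m \<otimes> inv (inv l)) \<otimes> inv l"
    using c by (simp add: a inv_mult_group m_assoc)
  then show "inv a \<in> M <#> L"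
    using set_mult_memI norm ml subgroup.m_inv_closed[OF M] subgroup.m_inv_closed[OF L] by metis
next
  fix a b assume "a \<in> M <#> L" "b \<in> M <#> L"
  then obtain m l m' l' where ml: "m \<in> M" "l \<in> L" "m' \<in> M" "l' \<in> L"
    and ab: "a = m \<otimes> l" "b = m' \<otimes> l'"
    by (auto elim!: set_mult_memE)
  have c: "m \<in> carrier G" "l \<in> carrier G" "m' \<in> carrier G" "l' \<in> carrier G"
    using ml M L subgroup.subset by blast+
  have "a \<otimes> b = (m \<otimes> (l \<otimes> m' \<otimes> inv l)) \<otimes> (l \<otimes> l')"
    using c by (simp add: ab m_assoc)
  then show "a \<otimes> b \<in> M <#> L"
    using set_mult_memI norm subgroup.m_closed[OF M] subgroup.m_closed[OF L] ml by metis
qed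

lemma subgroup_set_mult_commuting:
  assumes H: "subgroup H G" and K: "subgroup K G"
    and comm: "\<And>h k. h \<in> H \<Longrightarrow> k \<in> K \<Longrightarrow> h \<otimes> k = k \<otimes> h"
  shows "subgroup (H <#> K) G"
proof (rule subgroup_set_mult_normalizing[OF H K])
  fix k h assume "k \<in> K" "h \<in> H"
  moreover from this have "k \<in> carrier G" "h \<in> carrier G"
    using H K subgroup.subset by blast+
  ultimately show "k \<otimes> h \<otimes> inv k \<in> H"
    by (simp add: comm[symmetric] m_assoc)
qed

lemma generate_subgroup_eq: "subgroup H G \<Longrightarrow> generate G H = H"
  using generate_subgroup_incl[OF order.refl, of H] generate.incl[of _ H G] by auto

lemma set_mult_subset_generate_Un: "H <#> K \<subseteq> generate G (H \<union> K)"
proof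
  fix x assume "x \<in> H <#> K"
  then obtain h k where "h \<in> H" "k \<in> K" "x = h \<otimes> k" by (rule set_mult_memE)
  then show "x \<in> generate G (H \<union> K)"
    using generate.eng[OF generate.incl[of h] generate.incl[of k]] by blast
qed

lemma generate_Un_commuting:
  assumes H: "subgroup H G" and K: "subgroup K G"
    and comm: "\<And>h k. h \<in> H \<Longrightarrow> k \<in> K \<Longrightarrow> h \<otimes> k = k \<otimes> h"
  shows "generate G (H \<union> K) = H <#> K"
proof
  have "H \<subseteq> H <#> K" "K \<subseteq> H <#> K"
    using subset_set_mult_right[OF K] subset_set_mult_left[OF H] subgroup.subset[OF H]
      subgroup.subset[OF K] by auto
  then show "generate G (H \<union> K) \<subseteq> H <#> K"
    using generate_subgroup_incl[OF _ subgroup_set_mult_commuting[OF H K comm]] by blast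
qed (rule set_mult_subset_generate_Un)

lemma group_centerI_set_mult:
  assumes AN: "A <#> N = carrier G" and A: "subgroup A G" and N: "subgroup N G"
    and x: "x \<in> carrier G" "\<And>a. a \<in> A \<Longrightarrow> x \<otimes> a = a \<otimes> x" "\<And>n. n \<in> N \<Longrightarrow> x \<otimes> n = n \<otimes> x"
  shows "x \<in> group_center G"
proof (rule group_centerI_generate[OF _ _ x(1)])
  show "generate G (A \<union> N) = carrier G"
    using set_mult_subset_generate_Un[of A N] AN generate_incl A N subgroup.subset
    by (metis Un_least subset_antisym)
  show "A \<union> N \<subseteq> carrier G" using A N subgroup.subset by blast
qed (use x in blast)

lemma commute_set_mult_center:
  assumes x: "x \<in> A <#> group_center G" and A: "A \<subseteq> carrier G" and n: "n \<in> carrier G"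
    and comm: "\<And>a. a \<in> A \<Longrightarrow> a \<otimes> n = n \<otimes> a"
  shows "x \<otimes> n = n \<otimes> x"
proof -
  obtain a z where a: "a \<in> A" and z: "z \<in> group_center G" and x: "x = a \<otimes> z"
    using x by (rule set_mult_memE)
  have ac: "a \<in> carrier G" using a A by blast
  have "x \<otimes> n = (a \<otimes> n) \<otimes> z"
    using ac n z group_center_closed group_center_commute[OF z n] by (simp add: x m_assoc)
  also have "\<dots> = n \<otimes> x"
    using ac n z group_center_closed by (simp add: x comm[OF a] m_assoc)
  finally show ?thesis .
qed

lemma commutator_eq_one:
  assumes "x \<in> carrier G" "y \<in> carrier G" "x \<otimes> y = y \<otimes> x"
  shows "x \<otimes> y \<otimes> inv x \<otimes> inv y = \<one>"
  using assms by (simp add: m_assoc)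

lemma commutator_mult_center_left:
  assumes x: "x \<in> carrier G" and y: "y \<in> carrier G" and z: "z \<in> group_center G"
  shows "(x \<otimes> z) \<otimes> y \<otimes> inv (x \<otimes> z) \<otimes> inv y = x \<otimes> y \<otimes> inv x \<otimes> inv y"
proof -
  have zc: "z \<in> carrier G" using group_center_closed[OF z] .
  have "(x \<otimes> z) \<otimes> y \<otimes> inv (x \<otimes> z) \<otimes> inv y = x \<otimes> (z \<otimes> y) \<otimes> (inv z \<otimes> inv x) \<otimes> inv y"
    using x y zc by (simp add: m_assoc inv_mult_group)
  also have "\<dots> = x \<otimes> (y \<otimes> z) \<otimes> (inv z \<otimes> inv x) \<otimes> inv y"
    using group_center_commute[OF z y] by simp
  also have "\<dots> = x \<otimes> y \<otimes> inv x \<otimes> inv y" using x y zc by (simp add: m_assoc)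
  finally show ?thesis .
qed

lemma commutator_mult_center_right:
  assumes x: "x \<in> carrier G" and y: "y \<in> carrier G" and z: "z \<in> group_center G"
  shows "x \<otimes> (y \<otimes> z) \<otimes> inv x \<otimes> inv (y \<otimes> z) = x \<otimes> y \<otimes> inv x \<otimes> inv y"
proof -
  have zc: "z \<in> carrier G" using group_center_closed[OF z] .
  have "x \<otimes> (y \<otimes> z) \<otimes> inv x \<otimes> inv (y \<otimes> z) = x \<otimes> y \<otimes> (z \<otimes> inv x) \<otimes> (inv z \<otimes> inv y)"
    using x y zc by (simp add: m_assoc inv_mult_group)
  also have "\<dots> = x \<otimes> y \<otimes> (inv x \<otimes> z) \<otimes> (inv z \<otimes> inv y)"
    using group_center_commute[OF z] x by simp
  also have "\<dots> = x \<otimes> y \<otimes> inv x \<otimes> inv y" using x y zc by (simp add: m_assoc)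
  finally show ?thesis .
qed

lemma conjugate_mem_of_commutators:
  assumes M: "subgroup M G" and MH: "M \<subseteq> H" and Hc: "H \<subseteq> carrier G"
    and commutators: "\<And>x y. x \<in> H \<Longrightarrow> y \<in> H \<Longrightarrow> x \<otimes> y \<otimes> inv x \<otimes> inv y \<in> M"
    and y: "y \<in> H" and m: "m \<in> M"
  shows "y \<otimes> m \<otimes> inv y \<in> M"
proof -
  have c: "y \<in> carrier G" "m \<in> carrier G" using y m MH Hc by auto
  have "y \<otimes> m \<otimes> inv y = (y \<otimes> m \<otimes> inv y \<otimes> inv m) \<otimes> m" using c by (simp add: m_assoc)
  then show ?thesis using commutators[OF y] y m MH subgroup.m_closed[OF M] by (metis subsetD)
qed

lemma derived_subset_of_set_mult_center:
  assumes A: "subgroup A G" and K: "subgroup K G" and AK: "A \<subseteq> K <#> group_center G"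
  shows "derived G A \<subseteq> K"
  unfolding derived_def
proof (rule generate_subgroup_incl[OF _ K], safe)
  fix a1 a2 assume "a1 \<in> A" "a2 \<in> A"
  then obtain k1 z1 k2 z2 where k: "k1 \<in> K" "k2 \<in> K" and z: "z1 \<in> group_center G" "z2 \<in> group_center G"
    and a: "a1 = k1 \<otimes> z1" "a2 = k2 \<otimes> z2"
    using AK by (blast elim: set_mult_memE)
  have kc: "k1 \<in> carrier G" "k2 \<in> carrier G" using k K subgroup.subset by blast+
  have "a1 \<otimes> a2 \<otimes> inv a1 \<otimes> inv a2 = k1 \<otimes> k2 \<otimes> inv k1 \<otimes> inv k2"
    using commutator_mult_center_left[OF kc(1) _ z(1), of a2] commutator_mult_center_right[OF kc z(2)]
      kc z group_center_closed a by simp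
  then show "a1 \<otimes> a2 \<otimes> inv a1 \<otimes> inv a2 \<in> K"
    using k subgroup.m_closed[OF K] subgroup.m_inv_closed[OF K] by simp
qed

section \<open>Central decompositions\<close>

lemma central_decomposition_subgroup:
  "central_decomposition G \<A> \<Longrightarrow> H \<in> \<A> \<Longrightarrow> subgroup H G"
  by (simp add: central_decomposition_def)

lemma central_decomposition_commute:
  "central_decomposition G \<A> \<Longrightarrow> H \<in> \<A> \<Longrightarrow> K \<in> \<A> \<Longrightarrow> H \<noteq> K \<Longrightarrow>
    x \<in> H \<Longrightarrow> y \<in> K \<Longrightarrow> x \<otimes> y = y \<otimes> x"
  unfolding central_decomposition_def by blast

lemma central_decomposition_generate:
  "central_decomposition G \<A> \<Longrightarrow> generate G (\<Union>\<A>) = carrier G"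
  by (simp add: central_decomposition_def)

lemma central_decomposition_minimal:
  "central_decomposition G \<A> \<Longrightarrow> \<J> \<subset> \<A> \<Longrightarrow> generate G (\<Union>\<J>) \<noteq> carrier G"
  by (simp add: central_decomposition_def)

lemma central_decomposition_Union_subset:
  "central_decomposition G \<A> \<Longrightarrow> \<Union>\<A> \<subseteq> carrier G"
  using central_decomposition_subgroup subgroup.subset by blast

lemma central_decomposition_finite:
  assumes "finite (carrier G)" "central_decomposition G \<A>"
  shows "finite \<A>"
proof -
  have "\<A> \<subseteq> Pow (carrier G)"
    using central_decomposition_Union_subset[OF assms(2)] by blast
  then show ?thesis using assms(1) finite_subset by blast
qed

lemma central_decomposition_complement:
  assumes cd: "central_decomposition G \<A>" and A: "A \<in> \<A>"
  defines "N \<equiv> generate G (\<Union>(\<A> - {A}))"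
  shows "subgroup N G" and "\<And>a n. a \<in> A \<Longrightarrow> n \<in> N \<Longrightarrow> a \<otimes> n = n \<otimes> a"
    and "A <#> N = carrier G" and "N \<noteq> carrier G"
proof -
  have U: "\<Union>(\<A> - {A}) \<subseteq> carrier G" using central_decomposition_Union_subset[OF cd] by blast
  have AS: "subgroup A G" using central_decomposition_subgroup[OF cd A] .
  show NS: "subgroup N G" unfolding N_def using generate_is_subgroup[OF U] .
  show comm: "a \<otimes> n = n \<otimes> a" if "a \<in> A" "n \<in> N" for a n
  proof -
    have "a \<in> generate G A" using that(1) by (rule generate.incl)
    moreover have "s \<otimes> t = t \<otimes> s" if "s \<in> A" "t \<in> \<Union>(\<A> - {A})" for s t
      using that central_decomposition_commute[OF cd A] by blast
    ultimately show ?thesis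
      using commute_generate[OF subgroup.subset[OF AS] U] that(2) unfolding N_def by blast
  qed
  have "\<Union>\<A> \<subseteq> A \<union> N" unfolding N_def by (auto intro: generate.incl)
  then have "carrier G \<subseteq> generate G (A \<union> N)"
    using central_decomposition_generate[OF cd] mono_generate by blast
  also have "\<dots> = A <#> N" using generate_Un_commuting[OF AS NS comm] .
  finally show "A <#> N = carrier G"
    using subgroup.subset[OF subgroup_set_mult_commuting[OF AS NS comm]] by blast
  show "N \<noteq> carrier G"
    unfolding N_def using central_decomposition_minimal[OF cd] A by blast
qed

lemma central_decomposition_pair:
  assumes H: "subgroup H G" and M: "subgroup M G" and C: "subgroup C G"
    and MH: "M \<subseteq> H" and CH: "C \<subseteq> H"
    and comm: "\<And>m c. m \<in> M \<Longrightarrow> c \<in> C \<Longrightarrow> m \<otimes> c = c \<otimes> m" and prod: "M <#> C = H"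
    and "M \<noteq> H" and "C \<noteq> H" and "H \<noteq> {\<one>}"
  shows "central_decomposition (G\<lparr>carrier := H\<rparr>) {M, C}"
  unfolding central_decomposition_def
proof (intro conjI allI impI)
  show "\<forall>K\<in>{M, C}. subgroup K (G\<lparr>carrier := H\<rparr>)"
    using subgroup_incl[OF M H MH] subgroup_incl[OF C H CH] by auto
  show "\<forall>K\<in>{M, C}. \<forall>L\<in>{M, C}. K \<noteq> L \<longrightarrow>
      (\<forall>x\<in>K. \<forall>y\<in>L. x \<otimes>\<^bsub>G\<lparr>carrier := H\<rparr>\<^esub> y = y \<otimes>\<^bsub>G\<lparr>carrier := H\<rparr>\<^esub> x)"
    using comm by auto
  have "generate (G\<lparr>carrier := H\<rparr>) (M \<union> C) = generate G (M \<union> C)"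
    using generate_consistent[of "M \<union> C" H] MH CH H by auto
  also have "\<dots> = H" using generate_Un_commuting[OF M C comm] prod by simp
  finally show "generate (G\<lparr>carrier := H\<rparr>) (\<Union>{M, C}) = carrier (G\<lparr>carrier := H\<rparr>)"
    by simp
  fix \<J> assume J: "\<J> \<subset> {M, C}"
  then consider "\<Union>\<J> = {}" | "\<Union>\<J> = M" | "\<Union>\<J> = C" by blast
  then have "generate G (\<Union>\<J>) \<noteq> H"
  proof cases
    case 1
    show ?thesis unfolding 1 generate_empty using \<open>H \<noteq> {\<one>}\<close> by blast
  next
    case 2
    then show ?thesis using generate_subgroup_eq[OF M] \<open>M \<noteq> H\<close> by simp
  next
    case 3
    then show ?thesis using generate_subgroup_eq[OF C] \<open>C \<noteq> H\<close> by simp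
  qed
  moreover have "generate (G\<lparr>carrier := H\<rparr>) (\<Union>\<J>) = generate G (\<Union>\<J>)"
    using J MH CH by (intro generate_consistent H) blast
  ultimately show "generate (G\<lparr>carrier := H\<rparr>) (\<Union>\<J>) \<noteq> carrier (G\<lparr>carrier := H\<rparr>)"
    by simp
qed

lemma centrally_indecomposable_set_mult:
  assumes "centrally_indecomposable G H" and "subgroup H G" and "H \<noteq> {\<one>}"
    and "subgroup M G" and "subgroup C G" and "M \<subseteq> H" and "C \<subseteq> H"
    and "\<And>m c. m \<in> M \<Longrightarrow> c \<in> C \<Longrightarrow> m \<otimes> c = c \<otimes> m" and "M <#> C = H" and "M \<noteq> H"
  shows "C = H"
proof (rule ccontr)
  assume "C \<noteq> H"
  then have "central_decomposition (G\<lparr>carrier := H\<rparr>) {M, C}"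
    using central_decomposition_pair assms(2-10) by blast
  then have "{M, C} = {H}" using assms(1) by (simp add: centrally_indecomposable_def)
  with \<open>M \<noteq> H\<close> show False by blast
qed

lemma central_decomposition_iso_image:
  assumes \<alpha>: "\<alpha> \<in> iso G G" and cd: "central_decomposition G \<H>"
  shows "central_decomposition G ((\<lambda>H. \<alpha> ` H) ` \<H>)"
proof -
  interpret hom: group_hom G G \<alpha>
    using \<alpha> by (intro group_hom.intro group_hom_axioms.intro is_group iso_imp_homomorphism)
  have inj: "inj_on \<alpha> (carrier G)" and surj: "\<alpha> ` carrier G = carrier G"
    using \<alpha> by (auto simp: iso_iff)
  have U: "\<Union>\<H> \<subseteq> carrier G" using central_decomposition_Union_subset[OF cd] .
  have gen_image: "generate G (\<Union>((\<lambda>H. \<alpha> ` H) ` \<J>)) = \<alpha> ` generate G (\<Union>\<J>)"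
    if "\<J> \<subseteq> \<H>" for \<J>
  proof -
    have "\<Union>((\<lambda>H. \<alpha> ` H) ` \<J>) = \<alpha> ` (\<Union>\<J>)" by blast
    moreover have "\<Union>\<J> \<subseteq> carrier G" using that U by blast
    ultimately show ?thesis using hom.generate_img by simp
  qed
  show ?thesis unfolding central_decomposition_def
  proof (intro conjI allI impI ballI)
    fix H' assume "H' \<in> (\<lambda>H. \<alpha> ` H) ` \<H>"
    then show "subgroup H' G"
      using central_decomposition_subgroup[OF cd] hom.subgroup_img_is_subgroup by blast
  next
    fix H' K' x y assume "H' \<in> (\<lambda>H. \<alpha> ` H) ` \<H>" "K' \<in> (\<lambda>H. \<alpha> ` H) ` \<H>"
      and ne: "H' \<noteq> K'" and "x \<in> H'" "y \<in> K'"
    then obtain H K a b where HK: "H \<in> \<H>" "K \<in> \<H>" "H \<noteq> K" "a \<in> H" "b \<in> K"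
      and xy: "x = \<alpha> a" "y = \<alpha> b"
      by blast
    have "a \<in> carrier G" "b \<in> carrier G" using HK U by blast+
    then show "x \<otimes> y = y \<otimes> x"
      using central_decomposition_commute[OF cd HK] xy by (metis hom.hom_mult)
  next
    show "generate G (\<Union>((\<lambda>H. \<alpha> ` H) ` \<H>)) = carrier G"
      using gen_image[of \<H>] central_decomposition_generate[OF cd] surj by simp
  next
    fix \<J>' assume J': "\<J>' \<subset> (\<lambda>H. \<alpha> ` H) ` \<H>"
    define \<J> where "\<J> = {H \<in> \<H>. \<alpha> ` H \<in> \<J>'}"
    have JH: "\<J> \<subseteq> \<H>" by (simp add: \<J>_def)
    have J_image: "(\<lambda>H. \<alpha> ` H) ` \<J> = \<J>'" unfolding \<J>_def using J' by blast
    then have "\<J> \<subset> \<H>" using J' JH by blast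
    then have ne: "generate G (\<Union>\<J>) \<noteq> carrier G"
      using central_decomposition_minimal[OF cd] by blast
    have sub: "generate G (\<Union>\<J>) \<subseteq> carrier G"
      using JH U by (intro generate_incl) blast
    show "generate G (\<Union>\<J>') \<noteq> carrier G"
    proof
      assume "generate G (\<Union>\<J>') = carrier G"
      then have "\<alpha> ` generate G (\<Union>\<J>) = \<alpha> ` carrier G"
        using gen_image[OF JH] J_image surj by simp
      then show False using inj_on_image_eq_iff[OF inj sub] ne by simp
    qed
  qed
qed

lemma central_decomposition_center_factors:
  assumes cd: "central_decomposition G \<K>" and K: "K \<in> \<K>" and k: "k \<in> K"
    and s: "s \<in> carrier G" and comm: "\<And>y. y \<in> K \<Longrightarrow> s \<otimes> y = y \<otimes> s"
    and ks: "k \<otimes> s \<in> group_center G"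
  shows "k \<in> group_center G" and "s \<in> group_center G"
proof -
  have kc: "k \<in> carrier G" using central_decomposition_Union_subset[OF cd] K k by blast
  show kZ: "k \<in> group_center G"
  proof (rule group_centerI_generate[OF central_decomposition_generate[OF cd]
        central_decomposition_Union_subset[OF cd] kc])
    fix y assume "y \<in> \<Union>\<K>"
    then obtain L where L: "L \<in> \<K>" "y \<in> L" by blast
    show "k \<otimes> y = y \<otimes> k"
    proof (cases "L = K")
      case True
      then have y: "y \<in> K" "y \<in> carrier G" using L kc central_decomposition_Union_subset[OF cd] by auto
      have "k \<otimes> y \<otimes> s = k \<otimes> s \<otimes> y" using kc s y by (simp add: m_assoc comm)
      also have "\<dots> = y \<otimes> (k \<otimes> s)" using group_center_commute[OF ks] y by simp
      finally have "k \<otimes> y \<otimes> s = y \<otimes> k \<otimes> s" using kc s y by (simp add: m_assoc)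
      then show ?thesis using kc s y by simp
    next
      case False
      then show ?thesis using central_decomposition_commute[OF cd K L(1)] k L(2) by metis
    qed
  qed
  have "s = inv k \<otimes> (k \<otimes> s)" using kc s by simp
  then show "s \<in> group_center G"
    using kZ ks subgroup.m_closed[OF subgroup_group_center] subgroup.m_inv_closed[OF subgroup_group_center]
    by metis
qed

lemma group_center_subset_by_members:
  assumes cd: "central_decomposition G \<K>" and fin: "finite \<K>" and N: "subgroup N G"
    and members: "\<And>K. K \<in> \<K> \<Longrightarrow> K \<inter> group_center G \<subseteq> N"
  shows "group_center G \<subseteq> N"
proof -
  have "generate G (\<Union>\<S>) \<inter> group_center G \<subseteq> N" if "\<S> \<subseteq> \<K>" for \<S>
    using finite_subset[OF that fin] that
  proof (induction \<S> rule: finite_subset_induct')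
    case empty
    then show ?case using generate_empty subgroup.one_closed[OF N] by auto
  next
    case (insert K \<S>)
    define S where "S = generate G (\<Union>\<S>)"
    have KS: "subgroup K G" using central_decomposition_subgroup[OF cd insert.hyps(2)] .
    have U: "\<Union>\<S> \<subseteq> carrier G"
      using central_decomposition_Union_subset[OF cd] insert.hyps(3) by blast
    have SS: "subgroup S G" unfolding S_def using generate_is_subgroup[OF U] .
    have comm: "k \<otimes> s = s \<otimes> k" if "k \<in> K" "s \<in> S" for k s
    proof (rule commute_generate[OF subgroup.subset[OF KS] U _ generate.incl[OF that(1)]])
      show "s \<in> generate G (\<Union>\<S>)" using that(2) unfolding S_def .
      show "k' \<otimes> t = t \<otimes> k'" if "k' \<in> K" "t \<in> \<Union>\<S>" for k' t
        using that insert.hyps(3,4) central_decomposition_commute[OF cd insert.hyps(2)] by blast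
    qed
    have "generate G (\<Union>(insert K \<S>)) \<subseteq> generate G (K \<union> S)"
      unfolding S_def by (intro mono_generate) (auto intro: generate.incl)
    then have gen: "generate G (\<Union>(insert K \<S>)) \<subseteq> K <#> S"
      using generate_Un_commuting[OF KS SS comm] by simp
    show ?case
    proof
      fix x assume "x \<in> generate G (\<Union>(insert K \<S>)) \<inter> group_center G"
      then have x: "x \<in> K <#> S" "x \<in> group_center G" using gen by auto
      then obtain k s where ks: "k \<in> K" "s \<in> S" "x = k \<otimes> s" by (auto elim: set_mult_memE)
      have sc: "s \<in> carrier G" using ks SS subgroup.subset by blast
      note factors = central_decomposition_center_factors[OF cd insert.hyps(2) ks(1) sc]
      have "s \<in> N" using factors(2) comm ks x(2) insert.IH unfolding S_def by (metis IntI subsetD)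
      moreover have "k \<in> N" using factors(1) comm ks x(2) members[OF insert.hyps(2)] by (metis IntI subsetD)
      ultimately show "x \<in> N" using ks subgroup.m_closed[OF N] by simp
    qed
  qed
  then show ?thesis
    using central_decomposition_generate[OF cd] group_center_closed by blast
qed

section \<open>Automorphisms extending a homomorphism of a central factor\<close>

lemma set_mult_factor_map_eq:
  assumes A: "subgroup A G" and N: "subgroup N G"
    and \<psi>_closed: "\<And>a. a \<in> A \<Longrightarrow> \<psi> a \<in> carrier G"
    and \<psi>_mult: "\<And>a b. a \<in> A \<Longrightarrow> b \<in> A \<Longrightarrow> \<psi> (a \<otimes> b) = \<psi> a \<otimes> \<psi> b"
    and \<psi>_fix: "\<And>d. d \<in> A \<Longrightarrow> d \<in> N \<Longrightarrow> \<psi> d = d"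
    and a: "a \<in> A" "a' \<in> A" and n: "n \<in> N" "n' \<in> N" and eq: "a \<otimes> n = a' \<otimes> n'"
  shows "\<psi> a \<otimes> n = \<psi> a' \<otimes> n'"
proof -
  have c: "a \<in> carrier G" "a' \<in> carrier G" "n \<in> carrier G" "n' \<in> carrier G"
    using a n A N subgroup.subset by blast+
  define d where "d = inv a' \<otimes> a"
  have d_alt: "d = n' \<otimes> inv n"
    using eq c unfolding d_def by (metis inv_solve_left inv_solve_right m_assoc m_closed inv_closed)
  have dA: "d \<in> A" using a subgroup.m_closed[OF A] subgroup.m_inv_closed[OF A] by (simp add: d_def)
  have dN: "d \<in> N" using n subgroup.m_closed[OF N] subgroup.m_inv_closed[OF N] by (simp add: d_alt)
  have "\<psi> a = \<psi> a' \<otimes> \<psi> d" using \<psi>_mult[OF a(2) dA] c by (simp add: d_def)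
  also have "\<dots> = \<psi> a' \<otimes> (n' \<otimes> inv n)" using \<psi>_fix[OF dA dN] d_alt by simp
  finally show ?thesis using c \<psi>_closed[OF a(2)] by (simp add: m_assoc)
qed

lemma hom_extend_commuting_complement:
  assumes A: "subgroup A G" and N: "subgroup N G" and AN: "A <#> N = carrier G"
    and comm: "\<And>a n. a \<in> A \<Longrightarrow> n \<in> N \<Longrightarrow> a \<otimes> n = n \<otimes> a"
    and \<psi>_closed: "\<And>a. a \<in> A \<Longrightarrow> \<psi> a \<in> carrier G"
    and \<psi>_mult: "\<And>a b. a \<in> A \<Longrightarrow> b \<in> A \<Longrightarrow> \<psi> (a \<otimes> b) = \<psi> a \<otimes> \<psi> b"
    and \<psi>_comm: "\<And>a n. a \<in> A \<Longrightarrow> n \<in> N \<Longrightarrow> \<psi> a \<otimes> n = n \<otimes> \<psi> a"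
    and \<psi>_fix: "\<And>d. d \<in> A \<Longrightarrow> d \<in> N \<Longrightarrow> \<psi> d = d"
  obtains \<alpha> where "\<alpha> \<in> hom G G" and "\<And>a n. a \<in> A \<Longrightarrow> n \<in> N \<Longrightarrow> \<alpha> (a \<otimes> n) = \<psi> a \<otimes> n"
proof -
  have Ac: "A \<subseteq> carrier G" and Nc: "N \<subseteq> carrier G" using A N subgroup.subset by auto
  have factor: "\<exists>a n. a \<in> A \<and> n \<in> N \<and> x = a \<otimes> n" if "x \<in> carrier G" for x
    using that unfolding AN[symmetric] by (auto elim: set_mult_memE)
  have well_defined: "\<psi> a \<otimes> n = \<psi> a' \<otimes> n'"
    if "a \<in> A" "a' \<in> A" "n \<in> N" "n' \<in> N" "a \<otimes> n = a' \<otimes> n'" for a n a' n'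
    using set_mult_factor_map_eq[OF A N \<psi>_closed \<psi>_mult \<psi>_fix that] .
  define \<alpha> where "\<alpha> x = (SOME y. \<exists>a n. a \<in> A \<and> n \<in> N \<and> x = a \<otimes> n \<and> y = \<psi> a \<otimes> n)" for x
  have \<alpha>_factor: "\<alpha> (a \<otimes> n) = \<psi> a \<otimes> n" if "a \<in> A" "n \<in> N" for a n
    unfolding \<alpha>_def
  proof (rule some_equality)
    show "\<exists>a' n'. a' \<in> A \<and> n' \<in> N \<and> a \<otimes> n = a' \<otimes> n' \<and> \<psi> a \<otimes> n = \<psi> a' \<otimes> n'"
      using that by blast
  next
    fix y assume "\<exists>a' n'. a' \<in> A \<and> n' \<in> N \<and> a \<otimes> n = a' \<otimes> n' \<and> y = \<psi> a' \<otimes> n'"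
    then show "y = \<psi> a \<otimes> n" using that well_defined by metis
  qed
  have "\<alpha> \<in> hom G G"
  proof (rule homI)
    fix x assume "x \<in> carrier G"
    then obtain a n where "a \<in> A" "n \<in> N" "x = a \<otimes> n" using factor by blast
    then show "\<alpha> x \<in> carrier G" using \<alpha>_factor \<psi>_closed Nc by auto
  next
    fix x y assume "x \<in> carrier G" "y \<in> carrier G"
    then obtain a n b m where an: "a \<in> A" "n \<in> N" "x = a \<otimes> n"
      and bm: "b \<in> A" "m \<in> N" "y = b \<otimes> m"
      using factor by meson
    have c: "a \<in> carrier G" "n \<in> carrier G" "b \<in> carrier G" "m \<in> carrier G"
      "\<psi> a \<in> carrier G" "\<psi> b \<in> carrier G"
      using an bm Ac Nc \<psi>_closed by auto
    have "x \<otimes> y = (a \<otimes> b) \<otimes> (n \<otimes> m)"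
      using c an bm comm[OF bm(1) an(2)] by (simp add: m_assoc) (metis m_assoc)
    then have "\<alpha> (x \<otimes> y) = \<psi> a \<otimes> \<psi> b \<otimes> (n \<otimes> m)"
      using \<alpha>_factor an bm subgroup.m_closed[OF A] subgroup.m_closed[OF N] \<psi>_mult by simp
    also have "\<dots> = (\<psi> a \<otimes> n) \<otimes> (\<psi> b \<otimes> m)"
      using c \<psi>_comm[OF bm(1) an(2)] by (simp add: m_assoc) (metis m_assoc)
    finally show "\<alpha> (x \<otimes> y) = \<alpha> x \<otimes> \<alpha> y" using \<alpha>_factor an bm by simp
  qed
  with \<alpha>_factor show ?thesis using that by blast
qed

lemma iso_extend_commuting_complement:
  assumes fin: "finite (carrier G)"
    and A: "subgroup A G" and N: "subgroup N G" and AN: "A <#> N = carrier G"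
    and comm: "\<And>a n. a \<in> A \<Longrightarrow> n \<in> N \<Longrightarrow> a \<otimes> n = n \<otimes> a"
    and \<psi>_closed: "\<And>a. a \<in> A \<Longrightarrow> \<psi> a \<in> carrier G"
    and \<psi>_mult: "\<And>a b. a \<in> A \<Longrightarrow> b \<in> A \<Longrightarrow> \<psi> (a \<otimes> b) = \<psi> a \<otimes> \<psi> b"
    and \<psi>_comm: "\<And>a n. a \<in> A \<Longrightarrow> n \<in> N \<Longrightarrow> \<psi> a \<otimes> n = n \<otimes> \<psi> a"
    and \<psi>_fix: "\<And>d. d \<in> A \<Longrightarrow> d \<in> N \<Longrightarrow> \<psi> d = d"
    and \<psi>_inj: "\<And>a. a \<in> A \<Longrightarrow> \<psi> a \<in> N \<Longrightarrow> \<psi> a = a"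
  obtains \<alpha> where "\<alpha> \<in> iso G G" and "\<And>n. n \<in> N \<Longrightarrow> \<alpha> n = n" and "\<And>a. a \<in> A \<Longrightarrow> \<alpha> a = \<psi> a"
proof -
  obtain \<alpha> where hom: "\<alpha> \<in> hom G G"
    and \<alpha>_factor: "\<And>a n. a \<in> A \<Longrightarrow> n \<in> N \<Longrightarrow> \<alpha> (a \<otimes> n) = \<psi> a \<otimes> n"
    using hom_extend_commuting_complement[OF A N AN comm \<psi>_closed \<psi>_mult \<psi>_comm \<psi>_fix] by blast
  interpret hom: group_hom G G \<alpha>
    using hom by (intro group_hom.intro group_hom_axioms.intro is_group)
  have Ac: "A \<subseteq> carrier G" and Nc: "N \<subseteq> carrier G" using A N subgroup.subset by auto
  have \<alpha>_N: "\<alpha> n = n" if "n \<in> N" for n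
    using \<alpha>_factor[OF subgroup.one_closed[OF A] that] \<psi>_fix[of \<one>] A N that Nc
    by (auto simp: subgroup.one_closed)
  have \<alpha>_A: "\<alpha> a = \<psi> a" if "a \<in> A" for a
    using \<alpha>_factor[OF that subgroup.one_closed[OF N]] that Ac \<psi>_closed by auto
  have "kernel G G \<alpha> \<subseteq> {\<one>}"
  proof
    fix x assume "x \<in> kernel G G \<alpha>"
    then have x: "x \<in> carrier G" "\<alpha> x = \<one>" by (auto simp: kernel_def)
    then obtain a n where an: "a \<in> A" "n \<in> N" "x = a \<otimes> n"
      unfolding AN[symmetric] by (auto elim: set_mult_memE)
    have c: "n \<in> carrier G" "\<psi> a \<in> carrier G" using an Nc \<psi>_closed by auto
    have "\<psi> a \<otimes> n = \<one>" using \<alpha>_factor[OF an(1,2)] an x by simp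
    then have "\<psi> a = inv n" using c by (simp add: inv_equality[symmetric] inv_comm)
    then have "\<psi> a \<in> N" using subgroup.m_inv_closed[OF N an(2)] by simp
    then have "a = \<psi> a" using \<psi>_inj[OF an(1)] by simp
    with \<open>\<psi> a \<otimes> n = \<one>\<close> an show "x \<in> {\<one>}" by simp
  qed
  then have "kernel G G \<alpha> = {\<one>}" by (auto simp: kernel_def)
  then have inj: "inj_on \<alpha> (carrier G)" using hom.inj_iff_trivial_ker by blast
  have "\<alpha> ` carrier G = carrier G"
    using endo_inj_surj[OF fin _ inj] hom.hom_closed by blast
  then have "\<alpha> \<in> iso G G" using hom inj by (simp add: iso_iff)
  with \<alpha>_N \<alpha>_A show ?thesis using that by blast
qed

lemma set_mult_group_center_eq_complement:
  assumes K: "subgroup K G" and WZ: "W \<subseteq> group_center G" and DK: "D \<subseteq> K"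
    and WD: "W <#> D = group_center G"
  shows "K <#> group_center G = K <#> W"
proof
  show "K <#> W \<subseteq> K <#> group_center G" using WZ by (rule mono_set_mult[OF order.refl])
  show "K <#> group_center G \<subseteq> K <#> W"
  proof
    fix x assume "x \<in> K <#> group_center G"
    then obtain k z where kz: "k \<in> K" "z \<in> W <#> D" "x = k \<otimes> z"
      unfolding WD by (rule set_mult_memE)
    then obtain w d where kwd: "k \<in> K" "w \<in> W" "d \<in> D" and x: "x = k \<otimes> (w \<otimes> d)"
      by (auto elim!: set_mult_memE)
    have c: "k \<in> carrier G" "d \<in> carrier G" "w \<in> carrier G"
      using kwd DK WZ K subgroup.subset group_center_closed by blast+
    have "w \<in> group_center G" using kwd WZ by blast
    then have "x = (k \<otimes> d) \<otimes> w"
      using group_center_commute[of w d] c by (simp add: x m_assoc)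
    then show "x \<in> K <#> W"
      using set_mult_memI subgroup.m_closed[OF K] kwd DK by (metis subsetD)
  qed
qed

lemma exists_set_mult_projection:
  assumes K: "subgroup K G" and W: "subgroup W G" and KW: "K \<inter> W \<subseteq> {\<one>}"
  obtains \<pi> where "\<And>k w. k \<in> K \<Longrightarrow> w \<in> W \<Longrightarrow> \<pi> (k \<otimes> w) = k"
proof
  fix k w assume kw: "k \<in> K" "w \<in> W"
  have unique: "k' = k" if "k' \<in> K" "w' \<in> W" "k \<otimes> w = k' \<otimes> w'" for k' w'
  proof -
    have c: "k \<in> carrier G" "w \<in> carrier G" "k' \<in> carrier G" "w' \<in> carrier G"
      using kw that K W subgroup.subset by blast+
    have "inv k' \<otimes> k = w' \<otimes> inv w"
      using that(3) c by (metis inv_solve_left inv_solve_right m_assoc m_closed inv_closed)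
    moreover have "inv k' \<otimes> k \<in> K" "w' \<otimes> inv w \<in> W"
      using kw that subgroup.m_closed subgroup.m_inv_closed K W by metis+
    ultimately have "inv k' \<otimes> k = \<one>" using KW by auto
    then show "k' = k" using mult_inv_cancel_left[OF c(3,1)] c by simp
  qed
  show "(SOME k'. k' \<in> K \<and> (\<exists>w'\<in>W. k \<otimes> w = k' \<otimes> w')) = k"
    using kw unique by (intro some_equality) blast+
qed

lemma set_mult_projection_mult:
  assumes K: "subgroup K G" and W: "subgroup W G" and WZ: "W \<subseteq> group_center G"
    and \<pi>: "\<And>k w. k \<in> K \<Longrightarrow> w \<in> W \<Longrightarrow> \<pi> (k \<otimes> w) = k"
    and x: "x \<in> K <#> W" and y: "y \<in> K <#> W"
  shows "\<pi> (x \<otimes> y) = \<pi> x \<otimes> \<pi> y"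
proof -
  obtain k w l v where kl: "k \<in> K" "l \<in> K" and wv: "w \<in> W" "v \<in> W"
    and xy: "x = k \<otimes> w" "y = l \<otimes> v"
    using x y by (auto elim!: set_mult_memE)
  have c: "k \<in> carrier G" "l \<in> carrier G" "w \<in> carrier G" "v \<in> carrier G"
    using kl wv K W subgroup.subset by blast+
  have "w \<in> group_center G" using wv WZ by blast
  then have "x \<otimes> y = (k \<otimes> l) \<otimes> (w \<otimes> v)"
    using c by (simp add: xy m_assoc group_center_left_commute)
  then show ?thesis
    using \<pi> kl wv xy subgroup.m_closed[OF K] subgroup.m_closed[OF W] by simp
qed

lemma iso_exchange_central_complement:
  assumes fin: "finite (carrier G)"
    and A: "subgroup A G" and N: "subgroup N G" and AN: "A <#> N = carrier G"
    and comm: "\<And>a n. a \<in> A \<Longrightarrow> n \<in> N \<Longrightarrow> a \<otimes> n = n \<otimes> a"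
    and K: "subgroup K G" and W: "subgroup W G" and WZ: "W \<subseteq> group_center G"
    and KW: "K \<inter> W \<subseteq> {\<one>}" and A_KW: "A \<subseteq> K <#> W" and K_AW: "K \<subseteq> A <#> W"
    and AZ: "A \<inter> group_center G \<subseteq> K" and KZ: "K \<inter> group_center G \<subseteq> A"
  obtains \<beta> where "\<beta> \<in> iso G G" and "\<beta> ` A = K" and "\<And>n. n \<in> N \<Longrightarrow> \<beta> n = n"
proof -
  have Ac: "A \<subseteq> carrier G" and Nc: "N \<subseteq> carrier G" and Kc: "K \<subseteq> carrier G"
    and Wc: "W \<subseteq> carrier G"
    using A N K W subgroup.subset by auto
  obtain \<pi> where \<pi>: "\<And>k w. k \<in> K \<Longrightarrow> w \<in> W \<Longrightarrow> \<pi> (k \<otimes> w) = k"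
    using exists_set_mult_projection[OF K W KW] by blast
  have A_split: "\<exists>w\<in>W. \<pi> a \<in> K \<and> a = \<pi> a \<otimes> w" if a: "a \<in> A" for a
  proof -
    obtain k w where "k \<in> K" "w \<in> W" "a = k \<otimes> w"
      using a A_KW by (blast elim: set_mult_memE)
    then show ?thesis using \<pi> by auto
  qed
  have K_comm: "k \<otimes> n = n \<otimes> k" if "k \<in> K" "n \<in> N" for k n
    using commute_set_mult_center[OF _ Ac] mono_set_mult[OF order.refl WZ] K_AW comm that Nc by blast
  have \<pi>_closed: "\<pi> a \<in> carrier G" if "a \<in> A" for a using A_split[OF that] Kc by blast
  have \<pi>_mult: "\<pi> (a \<otimes> b) = \<pi> a \<otimes> \<pi> b" if "a \<in> A" "b \<in> A" for a b
    using set_mult_projection_mult[OF K W WZ \<pi>] that A_KW by blast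
  have \<pi>_comm: "\<pi> a \<otimes> n = n \<otimes> \<pi> a" if "a \<in> A" "n \<in> N" for a n
    using K_comm A_split[OF that(1)] that(2) by blast
  have \<pi>_fix: "\<pi> d = d" if "d \<in> A" "d \<in> N" for d
  proof -
    have "d \<in> group_center G"
      using group_centerI_set_mult[OF AN A N] that comm Ac by (metis subsetD)
    then have "d \<in> K" using AZ that by blast
    then show ?thesis using \<pi>[of d \<one>] Kc subgroup.one_closed[OF W] by auto
  qed
  have \<pi>_inj: "\<pi> a = a" if a: "a \<in> A" and \<pi>a: "\<pi> a \<in> N" for a
  proof -
    obtain w where w: "w \<in> W" "\<pi> a \<in> K" "a = \<pi> a \<otimes> w" using A_split[OF a] by blast
    have c: "\<pi> a \<in> carrier G" "w \<in> carrier G" using w Kc Wc by blast+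
    have "\<pi> a \<in> group_center G"
      using group_centerI_set_mult[OF AN A N] c comm[OF _ \<pi>a] K_comm[OF w(2)] by metis
    then have "\<pi> a \<in> A" using KZ w(2) by blast
    then have "w \<in> A"
      using w c a subgroup.m_closed[OF A] subgroup.m_inv_closed[OF A] inv_mult_cancel_left by metis
    then have "w = \<one>" using AZ KW w(1) WZ by blast
    then show ?thesis using w c by simp
  qed
  obtain \<beta> where \<beta>: "\<beta> \<in> iso G G" "\<And>n. n \<in> N \<Longrightarrow> \<beta> n = n" "\<And>a. a \<in> A \<Longrightarrow> \<beta> a = \<pi> a"
    using iso_extend_commuting_complement[OF fin A N AN comm \<pi>_closed \<pi>_mult \<pi>_comm \<pi>_fix \<pi>_inj]
    by blast
  have "K \<subseteq> \<pi> ` A"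
  proof
    fix k assume k: "k \<in> K"
    then obtain a w where aw: "a \<in> A" "w \<in> W" "k = a \<otimes> w" using K_AW by (auto elim!: set_mult_memE)
    then have "a = k \<otimes> inv w" using Ac Wc by (simp add: m_assoc subsetD)
    then have "\<pi> a = k" using \<pi> k subgroup.m_inv_closed[OF W aw(2)] by simp
    then show "k \<in> \<pi> ` A" using aw(1) by blast
  qed
  moreover have "\<pi> ` A \<subseteq> K" using A_split by blast
  moreover have "\<beta> ` A = \<pi> ` A" using \<beta>(3) by (rule image_cong[OF refl])
  ultimately have "\<beta> ` A = K" by blast
  then show ?thesis by (rule that[OF \<beta>(1) _ \<beta>(2)])
qed

end

section \<open>Groups of prime exponent\<close>

locale prime_exponent_group = group G for G (structure) +
  fixes p :: nat
  assumes prime_exponent: "Factorial_Ring.prime p"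
    and pow_exponent: "x \<in> carrier G \<Longrightarrow> x [^] p = \<one>"
    and finite_carrier: "finite (carrier G)"
begin

lemma ord_dvd_exponent: "x \<in> carrier G \<Longrightarrow> ord x dvd p"
  using pow_eq_id pow_exponent by blast

lemma ord_eq_exponent: "x \<in> carrier G \<Longrightarrow> x \<noteq> \<one> \<Longrightarrow> ord x = p"
  using ord_dvd_exponent prime_exponent ord_eq_1 by (metis prime_nat_iff)

lemma pow_multiple_exponent: "x \<in> carrier G \<Longrightarrow> p dvd i \<Longrightarrow> x [^] i = \<one>"
  using ord_dvd_exponent pow_eq_id dvd_trans by blast

lemma generate_singleton_eq: "x \<in> carrier G \<Longrightarrow> generate G {x} = {x [^] (i::nat) | i. True}"
  using generate_pow_on_finite_carrier[OF finite_carrier] by simp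

lemma mem_subgroup_of_pow:
  assumes S: "subgroup S G" and x: "x \<in> carrier G" and xi: "x [^] (i::nat) \<in> S"
    and nd: "\<not> p dvd i"
  shows "x \<in> S"
proof -
  have "i \<noteq> 0" using nd by (metis dvd_0_right)
  then obtain a b where ab: "i * a = p * b + gcd i p" using bezout_nat by blast
  have "gcd i p = 1"
    using prime_imp_coprime[OF prime_exponent nd] by (simp add: coprime_commute)
  then have "(x [^] i) [^] a = (x [^] p) [^] b \<otimes> x"
    using ab x by (simp add: nat_pow_pow nat_pow_mult[symmetric])
  then have "(x [^] i) [^] a = x" using x pow_exponent by simp
  then show ?thesis using subgroup_int_pow_closed[OF S xi, of "int a"] by (simp add: int_pow_int)
qed

lemma generate_singleton_Int:
  assumes D: "subgroup D G" and x: "x \<in> carrier G" "x \<notin> D"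
  shows "generate G {x} \<inter> D \<subseteq> {\<one>}"
proof
  fix y assume "y \<in> generate G {x} \<inter> D"
  then obtain i :: nat where y: "y = x [^] i" "y \<in> D" using generate_singleton_eq[OF x(1)] by auto
  then have "p dvd i" using mem_subgroup_of_pow[OF D x(1)] x(2) by blast
  then show "y \<in> {\<one>}" using y x(1) pow_multiple_exponent by simp
qed

lemma pow_eq_transfer:
  assumes x: "x \<in> carrier G" "x \<noteq> \<one>" and y: "y \<in> carrier G" and eq: "x [^] (i::nat) = x [^] (j::nat)"
  shows "y [^] i = y [^] j"
proof -
  have "int p dvd int j - int i"
    using eq int_pow_eq[OF x(1), of "int i" "int j"] ord_eq_exponent[OF x] by (simp add: int_pow_int)
  moreover have "int (ord y) dvd int p" using ord_dvd_exponent[OF y] by simp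
  ultimately have "int (ord y) dvd int j - int i" by (rule dvd_trans[rotated])
  then show ?thesis using int_pow_eq[OF y, of "int i" "int j"] by (simp add: int_pow_int)
qed

lemma exists_cyclic_map:
  assumes c: "c \<in> carrier G" "c \<noteq> \<one>" and e: "e \<in> carrier G" "e \<noteq> \<one>"
  obtains \<psi> where "\<psi> ` generate G {c} = generate G {e}"
    and "\<And>a b. a \<in> generate G {c} \<Longrightarrow> b \<in> generate G {c} \<Longrightarrow> \<psi> (a \<otimes> b) = \<psi> a \<otimes> \<psi> b"
    and "\<And>a. a \<in> generate G {c} \<Longrightarrow> \<psi> a = \<one> \<longleftrightarrow> a = \<one>"
proof
  define \<psi> where "\<psi> a = e [^] (SOME k::nat. a = c [^] k)" for a
  have \<psi>_pow: "\<psi> (c [^] i) = e [^] i" for i :: nat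
  proof -
    have "\<exists>k::nat. c [^] i = c [^] k" by blast
    then have "c [^] i = c [^] (SOME k::nat. c [^] i = c [^] k)" by (rule someI_ex)
    then show ?thesis unfolding \<psi>_def using pow_eq_transfer[OF c e(1)] by metis
  qed
  note C = generate_singleton_eq[OF c(1)] and E = generate_singleton_eq[OF e(1)]
  show "\<psi> ` generate G {c} = generate G {e}"
  proof
    show "\<psi> ` generate G {c} \<subseteq> generate G {e}" unfolding C E using \<psi>_pow by auto
    show "generate G {e} \<subseteq> \<psi> ` generate G {c}"
    proof
      fix y assume "y \<in> generate G {e}"
      then obtain i :: nat where "y = \<psi> (c [^] i)" unfolding E using \<psi>_pow by auto
      then show "y \<in> \<psi> ` generate G {c}" unfolding C by blast
    qed
  qed
  show "\<psi> (a \<otimes> b) = \<psi> a \<otimes> \<psi> b" if "a \<in> generate G {c}" "b \<in> generate G {c}" for a b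
    using that \<psi>_pow c(1) e(1) unfolding C by (auto simp: nat_pow_mult)
  show "\<psi> a = \<one> \<longleftrightarrow> a = \<one>" if a_mem: "a \<in> generate G {c}" for a
  proof -
    obtain i :: nat where a: "a = c [^] i" using a_mem unfolding C by blast
    have "e [^] i = \<one> \<longleftrightarrow> c [^] i = \<one>"
      using pow_eq_transfer[OF c e(1), of i 0] pow_eq_transfer[OF e c(1), of i 0] by auto
    then show ?thesis using \<psi>_pow a by simp
  qed
qed

lemma Int_set_mult_generate_singleton:
  assumes M: "subgroup M G" and S: "subgroup S G" and MT: "M <#> T \<subseteq> S" and MT1: "M \<inter> T \<subseteq> {\<one>}"
    and x: "x \<in> carrier G" "x \<notin> S"
  shows "(M <#> generate G {x}) \<inter> T \<subseteq> {\<one>}"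
proof
  fix y assume "y \<in> (M <#> generate G {x}) \<inter> T"
  then obtain m and i :: nat where m: "m \<in> M" and y: "y = m \<otimes> x [^] i" "y \<in> T"
    using generate_singleton_eq[OF x(1)] by (auto elim!: set_mult_memE)
  have mc: "m \<in> carrier G" using m M subgroup.subset by blast
  show "y \<in> {\<one>}"
  proof (cases "p dvd i")
    case True
    then have "y = m" using y x(1) mc pow_multiple_exponent by simp
    then show ?thesis using m y(2) MT1 by blast
  next
    case False
    have "x [^] i = inv m \<otimes> y" using y mc x(1) by simp
    then have "x [^] i \<in> S"
      using MT set_mult_memI[OF subgroup.m_inv_closed[OF M m] y(2)] by auto
    then show ?thesis using mem_subgroup_of_pow[OF S x(1) _ False] x(2) by blast
  qed
qed

lemma exists_complement_of_central_subgroup: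
  assumes H: "subgroup H G" and T: "subgroup T G" and TH: "T \<subseteq> H"
    and T_central: "\<And>t h. t \<in> T \<Longrightarrow> h \<in> H \<Longrightarrow> t \<otimes> h = h \<otimes> t"
    and D: "subgroup D G" and DH: "D \<subseteq> H" and DT: "D \<inter> T \<subseteq> {\<one>}"
    and commutators: "\<And>x y. x \<in> H \<Longrightarrow> y \<in> H \<Longrightarrow> x \<otimes> y \<otimes> inv x \<otimes> inv y \<in> D"
  obtains M where "subgroup M G" "D \<subseteq> M" "M \<subseteq> H" "M \<inter> T \<subseteq> {\<one>}" "M <#> T = H"
proof -
  (* A maximal such M is normalised by H, since it contains all commutators of H; adjoining
     to it an element of H outside MT would keep the intersection with T trivial. *)
  define \<F> where "\<F> = {M. subgroup M G \<and> D \<subseteq> M \<and> M \<subseteq> H \<and> M \<inter> T \<subseteq> {\<one>}}"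
  have "\<F> \<subseteq> Pow (carrier G)" unfolding \<F>_def using subgroup.subset by blast
  then have "finite \<F>" using finite_carrier finite_subset by blast
  moreover have "D \<in> \<F>" unfolding \<F>_def using D DH DT by blast
  ultimately obtain M where "M \<in> \<F>" and maximal: "\<forall>M'\<in>\<F>. M \<subseteq> M' \<longrightarrow> M = M'"
    using finite_has_maximal by blast
  then have M: "subgroup M G" and DM: "D \<subseteq> M" and MH: "M \<subseteq> H" and MT: "M \<inter> T \<subseteq> {\<one>}"
    unfolding \<F>_def by auto
  have Hc: "H \<subseteq> carrier G" using H subgroup.subset by blast
  have normalizes: "y \<otimes> m \<otimes> inv y \<in> M" if "y \<in> H" "m \<in> M" for y m
    using conjugate_mem_of_commutators[OF M _ Hc] commutators that MH DM by blast
  have MT_sub: "subgroup (M <#> T) G"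
    using subgroup_set_mult_commuting[OF M T] T_central MH by (metis subsetD)
  have MT_H: "M <#> T \<subseteq> H" using set_mult_subgroup_subset[OF H MH TH] .
  have "H \<subseteq> M <#> T"
  proof
    fix x assume x: "x \<in> H"
    show "x \<in> M <#> T"
    proof (rule ccontr)
      assume x_notin: "x \<notin> M <#> T"
      have xc: "x \<in> carrier G" using x Hc by blast
      have cyc_H: "generate G {x} \<subseteq> H" using generate_subgroup_incl[OF _ H] x by blast
      define M' where "M' = M <#> generate G {x}"
      have "subgroup M' G"
        unfolding M'_def using cyc_H normalizes
        by (intro subgroup_set_mult_normalizing M generate_is_subgroup) (use xc in auto)
      moreover have "M \<subseteq> M'"
        unfolding M'_def using subset_set_mult_right generate_is_subgroup xc MH Hc
        by (metis empty_subsetI insert_subset subset_trans)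
      moreover have "M' \<subseteq> H" unfolding M'_def using set_mult_subgroup_subset[OF H MH cyc_H] .
      moreover have "M' \<inter> T \<subseteq> {\<one>}"
        unfolding M'_def using Int_set_mult_generate_singleton[OF M MT_sub order.refl MT xc x_notin] .
      ultimately have "M = M'" using maximal DM unfolding \<F>_def by blast
      moreover have "x \<in> M'"
        using set_mult_memI[OF subgroup.one_closed[OF M] generate.incl[of x "{x}"]] xc
        unfolding M'_def by simp
      ultimately show False
        using x_notin subset_set_mult_right[OF T] MH Hc by blast
    qed
  qed
  with that M DM MH MT MT_H show ?thesis by blast
qed

lemma centrally_indecomposable_center_subset_derived:
  assumes H: "subgroup H G" and ind: "centrally_indecomposable G H"
    and noncentral: "\<not> H \<subseteq> group_center G"
  shows "H \<inter> group_center G \<subseteq> derived G H"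
proof
  fix z assume z: "z \<in> H \<inter> group_center G"
  show "z \<in> derived G H"
  proof (rule ccontr)
    assume z_notin: "z \<notin> derived G H"
    have Hc: "H \<subseteq> carrier G" using H subgroup.subset by blast
    have zc: "z \<in> carrier G" using z Hc by blast
    define T where "T = generate G {z}"
    have T: "subgroup T G" unfolding T_def using generate_is_subgroup zc by blast
    have TH: "T \<subseteq> H" unfolding T_def using generate_subgroup_incl[OF _ H] z by blast
    have TZ: "T \<subseteq> group_center G"
      unfolding T_def using generate_subgroup_incl[OF _ subgroup_group_center] z by blast
    have D: "subgroup (derived G H) G" using derived_is_subgroup[OF Hc] .
    obtain M where M: "subgroup M G" "M \<subseteq> H" "M \<inter> T \<subseteq> {\<one>}" "M <#> T = H"
    proof (rule exists_complement_of_central_subgroup[OF H T TH _ D])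
      show "t \<otimes> h = h \<otimes> t" if "t \<in> T" "h \<in> H" for t h
        using that TZ Hc group_center_commute by blast
      show "derived G H \<subseteq> H" using derived_incl[OF order.refl H] .
      show "derived G H \<inter> T \<subseteq> {\<one>}"
        using generate_singleton_Int[OF D zc z_notin] unfolding T_def by blast
      show "x \<otimes> y \<otimes> inv x \<otimes> inv y \<in> derived G H" if "x \<in> H" "y \<in> H" for x y
        using that unfolding derived_def by (blast intro: generate.incl)
    qed blast
    have "z \<noteq> \<one>" using z_notin subgroup.one_closed[OF D] by blast
    then have "M \<noteq> H" using M(3) z generate.incl[of z "{z}" G] unfolding T_def by blast
    moreover have "H \<noteq> {\<one>}" using noncentral subgroup.one_closed[OF subgroup_group_center] by blast
    moreover have "m \<otimes> t = t \<otimes> m" if "m \<in> M" "t \<in> T" for m t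
      using that M(2) Hc TZ group_center_commute by (metis subsetD)
    ultimately have "T = H"
      using centrally_indecomposable_set_mult[OF ind H _ M(1) T M(2) TH _ M(4)] by blast
    then show False using TZ noncentral by blast
  qed
qed

lemma central_indecomposable_eq_generate:
  assumes H: "subgroup H G" and ind: "centrally_indecomposable G H"
    and central: "H \<subseteq> group_center G" and c: "c \<in> H" "c \<noteq> \<one>"
  shows "H = generate G {c}"
proof -
  have Hc: "H \<subseteq> carrier G" using H subgroup.subset by blast
  have cc: "c \<in> carrier G" using c Hc by blast
  have comm: "x \<otimes> y = y \<otimes> x" if "x \<in> H" "y \<in> H" for x y
    using that central Hc group_center_commute by blast
  define T where "T = generate G {c}"
  have T: "subgroup T G" unfolding T_def using generate_is_subgroup cc by blast
  have TH: "T \<subseteq> H" unfolding T_def using generate_subgroup_incl[OF _ H] c by blast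
  obtain M where M: "subgroup M G" "M \<subseteq> H" "M \<inter> T \<subseteq> {\<one>}" "M <#> T = H"
  proof (rule exists_complement_of_central_subgroup[OF H T TH _ triv_subgroup])
    show "t \<otimes> h = h \<otimes> t" if "t \<in> T" "h \<in> H" for t h using that TH comm by blast
    show "{\<one>} \<subseteq> H" using subgroup.one_closed[OF H] by blast
    show "x \<otimes> y \<otimes> inv x \<otimes> inv y \<in> {\<one>}" if "x \<in> H" "y \<in> H" for x y
      using commutator_eq_one comm[OF that] that Hc by blast
  qed auto
  have "M \<noteq> H" using M(3) c generate.incl[of c "{c}" G] unfolding T_def by blast
  then have "T = H"
    using centrally_indecomposable_set_mult[OF ind H _ M(1) T M(2) TH _ M(4)] c comm TH M(2)
    by blast
  then show ?thesis unfolding T_def by simp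
qed

section \<open>Exchanging members of fully refined decompositions\<close>

lemma exchange_noncentral_member:
  assumes cd: "central_decomposition G \<A>" and A: "A \<in> \<A>"
    and indA: "centrally_indecomposable G A" and noncentral: "\<not> A \<subseteq> group_center G"
    and K: "subgroup K G" and indK: "centrally_indecomposable G K"
    and eq: "K <#> group_center G = A <#> group_center G"
  obtains \<beta> where "\<beta> \<in> iso G G" and "\<beta> ` A = K"
    and "\<And>n. n \<in> generate G (\<Union>(\<A> - {A})) \<Longrightarrow> \<beta> n = n"
proof -
  define Z where "Z = group_center G"
  have AS: "subgroup A G" using central_decomposition_subgroup[OF cd A] .
  have Zs: "subgroup Z G" unfolding Z_def by (rule subgroup_group_center)
  have Kc: "K \<subseteq> carrier G" and Ac: "A \<subseteq> carrier G" using K AS subgroup.subset by auto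
  have A_KZ: "A \<subseteq> K <#> Z" and K_AZ: "K \<subseteq> A <#> Z"
    using subset_set_mult_right[OF Zs Ac] subset_set_mult_right[OF Zs Kc] eq unfolding Z_def by auto
  have "\<not> K \<subseteq> Z"
    using set_mult_group_center_eq[OF K] A_KZ noncentral unfolding Z_def by auto
  then have KZA: "K \<inter> Z \<subseteq> A"
    using centrally_indecomposable_center_subset_derived[OF K indK]
      derived_subset_of_set_mult_center[OF K AS K_AZ[unfolded Z_def]] unfolding Z_def by blast
  have AZK: "A \<inter> Z \<subseteq> K"
    using centrally_indecomposable_center_subset_derived[OF AS indA noncentral]
      derived_subset_of_set_mult_center[OF AS K A_KZ[unfolded Z_def]] unfolding Z_def by blast
  have KZs: "subgroup (K \<inter> Z) G" using subgroups_Inter_pair[OF K Zs] .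
  obtain W where W: "subgroup W G" "W \<subseteq> Z" "W \<inter> (K \<inter> Z) \<subseteq> {\<one>}" "W <#> (K \<inter> Z) = Z"
  proof (rule exists_complement_of_central_subgroup[OF Zs KZs _ _ triv_subgroup])
    show "t \<otimes> z = z \<otimes> t" if "t \<in> K \<inter> Z" "z \<in> Z" for t z
      using that group_center_commute group_center_closed unfolding Z_def by blast
    show "x \<otimes> y \<otimes> inv x \<otimes> inv y \<in> {\<one>}" if "x \<in> Z" "y \<in> Z" for x y
      using that commutator_eq_one[of x y] group_center_commute[of x y] group_center_closed
      unfolding Z_def by blast
  qed (use subgroup.one_closed[OF Zs] in auto)
  have KW: "K \<inter> W \<subseteq> {\<one>}" using W(2,3) by blast
  have "K <#> Z = K <#> W" "A <#> Z = A <#> W"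
    using set_mult_group_center_eq_complement[OF _ W(2)[unfolded Z_def] _ W(4)[unfolded Z_def]]
      K AS KZA unfolding Z_def by auto
  then have "A \<subseteq> K <#> W" "K \<subseteq> A <#> W" using A_KZ K_AZ by auto
  then show ?thesis
    using iso_exchange_central_complement[OF finite_carrier AS _ _ _ K W(1) W(2)[unfolded Z_def] KW]
      central_decomposition_complement[OF cd A] AZK KZA that unfolding Z_def by blast
qed

lemma exchange_central_member:
  assumes cd: "central_decomposition G \<A>" and A: "A \<in> \<A>"
    and indA: "centrally_indecomposable G A" and centralA: "A \<subseteq> group_center G"
    and K: "subgroup K G" and indK: "centrally_indecomposable G K"
    and centralK: "K \<subseteq> group_center G" and K_N: "\<not> K \<subseteq> generate G (\<Union>(\<A> - {A}))"
  obtains \<beta> where "\<beta> \<in> iso G G" and "\<beta> ` A = K"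
    and "\<And>n. n \<in> generate G (\<Union>(\<A> - {A})) \<Longrightarrow> \<beta> n = n"
proof -
  define N where "N = generate G (\<Union>(\<A> - {A}))"
  note complement = central_decomposition_complement[OF cd A, folded N_def]
  have AS: "subgroup A G" using central_decomposition_subgroup[OF cd A] .
  have "\<not> A \<subseteq> N"
    using set_mult_subgroup_subset[OF complement(1) _ order.refl] complement(3,4)
      subgroup.subset[OF complement(1)] by blast
  then obtain c where c: "c \<in> A" "c \<notin> N" by blast
  obtain e where e: "e \<in> K" "e \<notin> N" using K_N unfolding N_def by blast
  have cc: "c \<in> carrier G" and ec: "e \<in> carrier G" using c e AS K subgroup.subset by blast+
  have c1: "c \<noteq> \<one>" and e1: "e \<noteq> \<one>" using c e subgroup.one_closed[OF complement(1)] by auto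
  have A_gen: "A = generate G {c}" using central_indecomposable_eq_generate[OF AS indA centralA c(1) c1] .
  have K_gen: "K = generate G {e}" using central_indecomposable_eq_generate[OF K indK centralK e(1) e1] .
  have AN: "A \<inter> N \<subseteq> {\<one>}" and KN: "K \<inter> N \<subseteq> {\<one>}"
    using generate_singleton_Int[OF complement(1)] cc c(2) ec e(2) A_gen K_gen by auto
  obtain \<psi> where \<psi>_image: "\<psi> ` A = K"
    and \<psi>_mult: "\<And>a b. a \<in> A \<Longrightarrow> b \<in> A \<Longrightarrow> \<psi> (a \<otimes> b) = \<psi> a \<otimes> \<psi> b"
    and \<psi>_one: "\<And>a. a \<in> A \<Longrightarrow> \<psi> a = \<one> \<longleftrightarrow> a = \<one>"
    using exists_cyclic_map[OF cc c1 ec e1] unfolding A_gen K_gen by blast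
  have \<psi>_K: "\<psi> a \<in> K" if "a \<in> A" for a using that \<psi>_image by blast
  have \<psi>_closed: "\<psi> a \<in> carrier G" if "a \<in> A" for a using \<psi>_K[OF that] K subgroup.subset by blast
  have \<psi>_comm: "\<psi> a \<otimes> n = n \<otimes> \<psi> a" if "a \<in> A" "n \<in> N" for a n
    using \<psi>_K[OF that(1)] centralK group_center_commute subgroup.subset[OF complement(1)] that(2)
    by blast
  have \<psi>_fix: "\<psi> d = d" if "d \<in> A" "d \<in> N" for d using that AN \<psi>_one by blast
  have \<psi>_inj: "\<psi> a = a" if "a \<in> A" "\<psi> a \<in> N" for a using that \<psi>_K KN \<psi>_one by blast
  obtain \<beta> where \<beta>: "\<beta> \<in> iso G G" "\<And>n. n \<in> N \<Longrightarrow> \<beta> n = n" "\<And>a. a \<in> A \<Longrightarrow> \<beta> a = \<psi> a"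
    using iso_extend_commuting_complement[OF finite_carrier AS complement(1,3,2)
        \<psi>_closed \<psi>_mult \<psi>_comm \<psi>_fix \<psi>_inj] by blast
  have "\<beta> ` A = \<psi> ` A" using \<beta>(3) by (rule image_cong[OF refl])
  then show ?thesis using that[OF \<beta>(1)] \<beta>(2) \<psi>_image unfolding N_def by simp
qed

lemma noncentral_member_match:
  assumes cdA: "central_decomposition G \<A>" and cdK: "central_decomposition G \<K>"
    and img: "(\<lambda>H. H <#> group_center G) ` \<A> = (\<lambda>K. K <#> group_center G) ` \<K>"
    and K: "K \<in> \<K>" and indK: "centrally_indecomposable G K"
    and noncentral: "\<not> K \<subseteq> group_center G"
  obtains H where "H \<in> \<A>" and "\<not> H \<subseteq> group_center G"
    and "K \<subseteq> H <#> group_center G" and "K \<inter> group_center G \<subseteq> H"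
proof -
  obtain H where H: "H \<in> \<A>" "H <#> group_center G = K <#> group_center G"
    using img K by (metis (no_types, lifting) image_iff)
  have KS: "subgroup K G" and HS: "subgroup H G"
    using central_decomposition_subgroup cdK cdA K H(1) by blast+
  have KHZ: "K \<subseteq> H <#> group_center G"
    using subset_set_mult_right[OF subgroup_group_center] subgroup.subset[OF KS] H(2) by blast
  moreover have "\<not> H \<subseteq> group_center G"
    using set_mult_group_center_eq[OF HS] KHZ noncentral by auto
  moreover have "K \<inter> group_center G \<subseteq> H"
    using centrally_indecomposable_center_subset_derived[OF KS indK noncentral]
      derived_subset_of_set_mult_center[OF KS HS KHZ] by blast
  ultimately show ?thesis using that H(1) by blast
qed

lemma exists_central_member_outside_complement:
  assumes cdA: "central_decomposition G \<A>" and A: "A \<in> \<A>" and centralA: "A \<subseteq> group_center G"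
    and cdK: "central_decomposition G \<K>"
    and indK: "\<And>K. K \<in> \<K> \<Longrightarrow> centrally_indecomposable G K"
    and img: "(\<lambda>H. H <#> group_center G) ` \<A> = (\<lambda>K. K <#> group_center G) ` \<K>"
  obtains K where "K \<in> \<K>" and "K \<subseteq> group_center G" and "\<not> K \<subseteq> generate G (\<Union>(\<A> - {A}))"
proof (rule ccontr)
  note outside = that
  assume "\<not> thesis"
  define N where "N = generate G (\<Union>(\<A> - {A}))"
  note complement = central_decomposition_complement[OF cdA A, folded N_def]
  have central_members: "K \<subseteq> N" if "K \<in> \<K>" "K \<subseteq> group_center G" for K
    using outside that \<open>\<not> thesis\<close> unfolding N_def by blast
  have noncentral_members: "\<exists>H. H \<subseteq> N \<and> K \<subseteq> H <#> group_center G \<and> K \<inter> group_center G \<subseteq> H"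
    if K: "K \<in> \<K>" and nc: "\<not> K \<subseteq> group_center G" for K
  proof -
    obtain H where "H \<in> \<A>" "\<not> H \<subseteq> group_center G" "K \<subseteq> H <#> group_center G"
      "K \<inter> group_center G \<subseteq> H"
      using noncentral_member_match[OF cdA cdK img K indK[OF K] nc] by blast
    moreover from this have "H \<subseteq> N"
      using centralA generate.incl[of _ "\<Union>(\<A> - {A})" G] unfolding N_def by blast
    ultimately show ?thesis by blast
  qed
  have "group_center G \<subseteq> N"
  proof (rule group_center_subset_by_members[OF cdK
        central_decomposition_finite[OF finite_carrier cdK] complement(1)])
    fix K assume "K \<in> \<K>"
    then show "K \<inter> group_center G \<subseteq> N"
      using central_members noncentral_members by (cases "K \<subseteq> group_center G") blast+
  qed
  then have "H <#> group_center G \<subseteq> N" if "H \<subseteq> N" for H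
    using set_mult_subgroup_subset[OF complement(1) that] by blast
  then have "\<Union>\<K> \<subseteq> N"
    using central_members noncentral_members by (metis Union_least subset_trans)
  then have "carrier G \<subseteq> N"
    using generate_subgroup_incl[OF _ complement(1)] central_decomposition_generate[OF cdK] by metis
  then show False using complement(4) subgroup.subset[OF complement(1)] by blast
qed

lemma exchange_member:
  assumes frA: "fully_refined G \<A>" and A: "A \<in> \<A>" and frK: "fully_refined G \<K>"
    and img: "(\<lambda>H. H <#> group_center G) ` \<A> = (\<lambda>K. K <#> group_center G) ` \<K>"
  obtains \<beta> where "\<beta> \<in> iso G G" and "\<beta> ` A \<in> \<K>"
    and "\<beta> ` A <#> group_center G = A <#> group_center G"
    and "\<And>n. n \<in> generate G (\<Union>(\<A> - {A})) \<Longrightarrow> \<beta> n = n"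
proof -
  have cdA: "central_decomposition G \<A>" and indA: "centrally_indecomposable G A"
    and cdK: "central_decomposition G \<K>" and indK: "\<And>K. K \<in> \<K> \<Longrightarrow> centrally_indecomposable G K"
    using frA frK A by (auto simp: fully_refined_def)
  have AS: "subgroup A G" using central_decomposition_subgroup[OF cdA A] .
  show ?thesis
  proof (cases "A \<subseteq> group_center G")
    case True
    obtain K where K: "K \<in> \<K>" "K \<subseteq> group_center G" "\<not> K \<subseteq> generate G (\<Union>(\<A> - {A}))"
      using exists_central_member_outside_complement[OF cdA A True cdK indK img] by blast
    have KS: "subgroup K G" using central_decomposition_subgroup[OF cdK K(1)] .
    obtain \<beta> where \<beta>: "\<beta> \<in> iso G G" "\<beta> ` A = K"
      "\<And>n. n \<in> generate G (\<Union>(\<A> - {A})) \<Longrightarrow> \<beta> n = n"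
      using exchange_central_member[OF cdA A indA True KS indK[OF K(1)] K(2,3)] by blast
    moreover have "K <#> group_center G = A <#> group_center G"
      using set_mult_group_center_eq[OF KS K(2)] set_mult_group_center_eq[OF AS True] by simp
    ultimately show ?thesis using that K(1) by simp
  next
    case False
    obtain K where K: "K \<in> \<K>" "K <#> group_center G = A <#> group_center G"
      using img A by (metis (no_types, lifting) image_iff)
    obtain \<beta> where "\<beta> \<in> iso G G" "\<beta> ` A = K"
      "\<And>n. n \<in> generate G (\<Union>(\<A> - {A})) \<Longrightarrow> \<beta> n = n"
      using exchange_noncentral_member[OF cdA A indA False
          central_decomposition_subgroup[OF cdK K(1)] indK[OF K(1)] K(2)] by blast
    then show ?thesis using that K by simp
  qed
qed

end

lemma image_eq_self_if_fixed: "(\<And>x. x \<in> A \<Longrightarrow> f x = x) \<Longrightarrow> f ` A = A"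
  using image_cong[of A A f "\<lambda>x. x"] by simp

definition partial_exchange ::
    "('a, 'b) monoid_scheme \<Rightarrow> 'a set set \<Rightarrow> 'a set set \<Rightarrow> 'a set set \<Rightarrow> ('a \<Rightarrow> 'a) \<Rightarrow> bool" where
  "partial_exchange G \<H> \<K> \<J> \<alpha> \<longleftrightarrow> \<alpha> \<in> iso G G \<and>
     (\<forall>J \<in> \<J>. \<alpha> ` J \<in> \<K> \<and> \<alpha> ` J <#>\<^bsub>G\<^esub> group_center G = J <#>\<^bsub>G\<^esub> group_center G) \<and>
     (\<forall>H \<in> \<H> - \<J>. \<forall>x \<in> H. \<alpha> x = x)"

context prime_exponent_group
begin

lemma partial_exchange_fixed:
  "partial_exchange G \<H> \<K> \<J> \<alpha> \<Longrightarrow> H \<in> \<H> - \<J> \<Longrightarrow> \<alpha> ` H = H"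
  unfolding partial_exchange_def by (intro image_eq_self_if_fixed) blast

lemma partial_exchange_image:
  assumes frH: "fully_refined G \<H>" and frK: "fully_refined G \<K>"
    and img: "(\<lambda>H. H <#> group_center G) ` \<H> = (\<lambda>K. K <#> group_center G) ` \<K>"
    and \<alpha>: "partial_exchange G \<H> \<K> \<J> \<alpha>"
  shows "fully_refined G ((\<lambda>H. \<alpha> ` H) ` \<H>)"
    and "(\<lambda>H. H <#> group_center G) ` ((\<lambda>H. \<alpha> ` H) ` \<H>) = (\<lambda>K. K <#> group_center G) ` \<K>"
proof -
  have iso: "\<alpha> \<in> iso G G"
    and exch: "\<And>J. J \<in> \<J> \<Longrightarrow> \<alpha> ` J \<in> \<K> \<and> \<alpha> ` J <#> group_center G = J <#> group_center G"
    using \<alpha> by (auto simp: partial_exchange_def)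
  note fixed = partial_exchange_fixed[OF \<alpha>]
  show "fully_refined G ((\<lambda>H. \<alpha> ` H) ` \<H>)"
    using central_decomposition_iso_image[OF iso] frH frK exch fixed
    unfolding fully_refined_def by (metis (no_types, lifting) DiffI image_iff)
  have "\<alpha> ` H <#> group_center G = H <#> group_center G" if "H \<in> \<H>" for H
    using that exch fixed by (cases "H \<in> \<J>") auto
  then have "(\<lambda>H. \<alpha> ` H <#> group_center G) ` \<H> = (\<lambda>H. H <#> group_center G) ` \<H>"
    by (rule image_cong[OF refl])
  then show "(\<lambda>H. H <#> group_center G) ` ((\<lambda>H. \<alpha> ` H) ` \<H>) = (\<lambda>K. K <#> group_center G) ` \<K>"
    using img by (simp add: image_image)
qed

lemma partial_exchange_insert:
  assumes frH: "fully_refined G \<H>" and frK: "fully_refined G \<K>"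
    and img: "(\<lambda>H. H <#> group_center G) ` \<H> = (\<lambda>K. K <#> group_center G) ` \<K>"
    and H0: "H0 \<in> \<H>" "H0 \<notin> \<J>" and J_sub: "\<J> \<subseteq> \<H>"
    and \<alpha>: "partial_exchange G \<H> \<K> \<J> \<alpha>"
  shows "\<exists>\<gamma>. partial_exchange G \<H> \<K> (insert H0 \<J>) \<gamma>"
proof -
  have iso: "\<alpha> \<in> iso G G"
    and exch: "\<And>J. J \<in> \<J> \<Longrightarrow> \<alpha> ` J \<in> \<K> \<and> \<alpha> ` J <#> group_center G = J <#> group_center G"
    and stable: "\<And>H x. H \<in> \<H> - \<J> \<Longrightarrow> x \<in> H \<Longrightarrow> \<alpha> x = x"
    using \<alpha> by (auto simp: partial_exchange_def)
  note fixed = partial_exchange_fixed[OF \<alpha>]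
  define \<A> where "\<A> = (\<lambda>H. \<alpha> ` H) ` \<H>"
  have in_\<A>: "\<alpha> ` H \<in> \<A>" if "H \<in> \<H>" for H using that unfolding \<A>_def by blast
  have \<alpha>H0: "\<alpha> ` H0 = H0" using fixed H0 by blast
  define N where "N = generate G (\<Union>(\<A> - {H0}))"
  obtain \<beta> where \<beta>: "\<beta> \<in> iso G G" "\<beta> ` H0 \<in> \<K>"
    "\<beta> ` H0 <#> group_center G = H0 <#> group_center G" "\<And>n. n \<in> N \<Longrightarrow> \<beta> n = n"
    using exchange_member[OF partial_exchange_image(1)[OF frH frK img \<alpha>] _ frK
        partial_exchange_image(2)[OF frH frK img \<alpha>]] in_\<A>[OF H0(1)] \<alpha>H0
    unfolding N_def \<A>_def by metis
  have \<beta>_on_N: "B \<subseteq> N" "\<beta> ` B = B" if "B \<in> \<A>" "B \<noteq> H0" for B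
  proof -
    show BN: "B \<subseteq> N" using that generate.incl[of _ "\<Union>(\<A> - {H0})" G] unfolding N_def by blast
    show "\<beta> ` B = B" using \<beta>(4) BN by (intro image_eq_self_if_fixed) blast
  qed
  have inj: "inj_on \<alpha> (carrier G)" using iso by (simp add: iso_iff)
  have U: "\<Union>\<H> \<subseteq> carrier G"
    using central_decomposition_Union_subset frH by (simp add: fully_refined_def)
  have comp: "(\<beta> \<circ> \<alpha>) ` B = \<beta> ` (\<alpha> ` B)" for B by (rule image_comp[symmetric])
  have "partial_exchange G \<H> \<K> (insert H0 \<J>) (\<beta> \<circ> \<alpha>)"
    unfolding partial_exchange_def
  proof (intro conjI ballI)
    show "\<beta> \<circ> \<alpha> \<in> iso G G" using iso_set_trans[OF iso \<beta>(1)] .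
  next
    fix J assume J: "J \<in> insert H0 \<J>"
    have "(\<beta> \<circ> \<alpha>) ` J \<in> \<K> \<and> (\<beta> \<circ> \<alpha>) ` J <#> group_center G = J <#> group_center G"
    proof (cases "J = H0")
      case True
      then show ?thesis using \<beta>(2,3) \<alpha>H0 by (simp only: comp)
    next
      case False
      then have JJ: "J \<in> \<J>" using J by blast
      then have "J \<subseteq> carrier G" "H0 \<subseteq> carrier G" using J_sub H0(1) U by blast+
      then have "\<alpha> ` J \<noteq> H0" using False \<alpha>H0 inj_on_image_eq_iff[OF inj] by metis
      moreover have "\<alpha> ` J \<in> \<A>" using in_\<A> JJ J_sub by blast
      ultimately have "(\<beta> \<circ> \<alpha>) ` J = \<alpha> ` J" using \<beta>_on_N(2) by (simp only: comp)
      then show ?thesis using exch[OF JJ] by simp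
    qed
    then show "(\<beta> \<circ> \<alpha>) ` J \<in> \<K>"
      and "(\<beta> \<circ> \<alpha>) ` J <#> group_center G = J <#> group_center G" by blast+
  next
    fix H x assume H: "H \<in> \<H> - insert H0 \<J>" and x: "x \<in> H"
    have "H \<in> \<H> - \<J>" "H \<noteq> H0" using H by auto
    then have "H \<in> \<A>" "H \<noteq> H0" using in_\<A>[of H] fixed[of H] by auto
    then have "x \<in> N" using \<beta>_on_N(1) x by blast
    moreover have "\<alpha> x = x" using stable[of H x] H x by blast
    ultimately show "(\<beta> \<circ> \<alpha>) x = x" using \<beta>(4) by simp
  qed
  then show ?thesis by blast
qed

lemma exists_partial_exchange:
  assumes frH: "fully_refined G \<H>" and frK: "fully_refined G \<K>"
    and img: "(\<lambda>H. H <#> group_center G) ` \<H> = (\<lambda>K. K <#> group_center G) ` \<K>"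
    and J: "\<J> \<subseteq> \<H>"
  shows "\<exists>\<alpha>. partial_exchange G \<H> \<K> \<J> \<alpha>"
proof -
  have "finite \<H>"
    using central_decomposition_finite[OF finite_carrier] frH by (simp add: fully_refined_def)
  then have "finite \<J>" using finite_subset[OF J] by blast
  from this J show ?thesis
  proof (induction \<J> rule: finite_subset_induct')
    case empty
    have "partial_exchange G \<H> \<K> {} (\<lambda>x. x)"
      by (simp add: partial_exchange_def iso_set_refl)
    then show ?case by blast
  next
    case (insert H0 \<J>)
    then show ?case using partial_exchange_insert[OF frH frK img] by blast
  qed
qed

end

theorem theorem2p8:
  fixes P :: "('a, 'b) monoid_scheme" and p :: nat
    and \<H> \<K> :: "'a set set"
  assumes "Factorial_Ring.prime p" and "odd p"
    and "group P" and "finite (carrier P)"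
    and "\<exists>n. card (carrier P) = p ^ n"
    and "nilpotent_class_two P"
    and "has_exponent P p"
    and "fully_refined P \<H>" and "fully_refined P \<K>"
    and "(\<lambda>H. H <#>\<^bsub>P\<^esub> group_center P) ` \<H> = (\<lambda>K. K <#>\<^bsub>P\<^esub> group_center P) ` \<K>"
  shows "exchangeable P \<H> \<K>"
proof -
  interpret prime_exponent_group P p
    using assms(3) by (rule prime_exponent_group.intro)
      (use assms(1,4,7) in \<open>auto simp: prime_exponent_group_axioms_def has_exponent_def\<close>)
  show ?thesis
    unfolding exchangeable_def
  proof (intro allI impI)
    fix \<J> assume "\<J> \<subseteq> \<H>"
    then obtain \<alpha> where "partial_exchange P \<H> \<K> \<J> \<alpha>"
      using exists_partial_exchange[OF assms(8-10)] by blast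
    then have "\<alpha> \<in> iso P P" and "\<forall>J \<in> \<J>. \<alpha> ` J \<in> \<K>"
      and stable: "\<forall>H \<in> \<H> - \<J>. \<forall>x \<in> H. \<alpha> x = x"
      by (auto simp: partial_exchange_def)
    moreover have "(\<lambda>J. \<alpha> ` J) ` (\<H> - \<J>) = \<H> - \<J>"
      using stable by (intro image_eq_self_if_fixed) blast
    ultimately show "\<exists>\<alpha>\<in>iso P P. (\<lambda>J. \<alpha> ` J) ` \<J> \<subseteq> \<K> \<and> (\<lambda>J. \<alpha> ` J) ` (\<H> - \<J>) = \<H> - \<J>"
      by blast
  qed
qed

end
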